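(* Let $f(\mathbf z,\bar{\mathbf z})$ be a convenient mixed function of $n$ variables. (1) If $f$ is of polar positive weighted homogeneous face type, then for every weight vector $P$, the face function $f_P$ is a polar weighted homogeneous polynomial. (2) If $f$ is of strongly polar positive weighted homogeneous face type, then for every weight vector $P$, the face function $f_P$ is a strongly polar positive weighted homogeneous polynomial (with respect to the weight $P$).
   Context: A mixed function is a convergent series $f(\mathbf z,\bar{\mathbf z})=\sum_{\nu,\mu}c_{\nu,\mu}\mathbf z^\nu\bar{\mathbf z}^\mu$, $\nu,\mu\in\mathbb Z_{\ge0}^n$. Its Newton polyhedron $\Gamma_+(f)$ is the convex hull of $\bigcup_{c_{\nu,\mu}\ne0}\big((\nu+\mu)+\mathbb R_{\ge0}^n\big)$, and $\Gamma(f)$ is the union of its compact faces. $f$ is convenient if $\Gamma(f)$ meets every coordinate axis. A weight vector is $P=(p_1,\dots,p_n)$ with positive integers $p_j$; $d(P;f)=\min\{\sum_j p_j\xi_j:\xi\in\Gamma_+(f)\}$, $\Delta(P)=\{\xi\in\Gamma_+(f):\sum_jp_j\xi_j=d(P;f)\}$, and the face function is $f_P=\sum_{\nu+\mu\in\Delta(P)}c_{\nu,\mu}\mathbf z^\nu\bar{\mathbf z}^\mu$. A mixed polynomial $h$ is polar weighted homogeneous if there exist positive integer vectors $Q$ (radial weight) and $P'$ (polar weight) and non-zero integers $m_r,m_p$ with $\sum_j q_j(\nu_j+\mu_j)=m_r$, $\sum_jp'_j(\nu_j-\mu_j)=m_p$ for all monomials of $h$; $m_p$ is its polar degree. It is strongly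 polar positive weighted homogeneous (with weight $P$) if this holds with $Q=P'=P$ and $m_p>0$. $f$ is of polar positive weighted homogeneous face type if for every $P$ with $\dim\Delta(P)=n-1$, $f_P$ is polar weighted homogeneous for some polar weight $P'$ with positive polar degree; it is of strongly polar positive weighted homogeneous face type if for every $P$ with $\dim\Delta(P)=n-1$, $f_P$ is strongly polar positive weighted homogeneous with weight $P$ itself. *)

theory Defs
  imports "HOL-Analysis.Analysis"
begin

text \<open>A mixed function of n variables (n = CARD('n)) is given by its coefficient family
  c nu mu (coefficient of z^nu zbar^mu), exponents being multi-indices 'n => nat.\<close>

type_synonym 'n mexp = "'n \<Rightarrow> nat"
type_synonym 'n mixed = "'n mexp \<Rightarrow> 'n mexp \<Rightarrow> complex"

definition mixed_convergent :: "('n::finite) mixed \<Rightarrow> bool" where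
  "mixed_convergent c \<longleftrightarrow> (\<exists>r::real. r > 0 \<and>
     (\<lambda>(nu, mu). norm (c nu mu) * r ^ (sum nu UNIV + sum mu UNIV)) summable_on UNIV)"

definition mixed_support :: "('n::finite) mixed \<Rightarrow> ('n mexp \<times> 'n mexp) set" where
  "mixed_support c = {(nu, mu). c nu mu \<noteq> 0}"

definition exp_point :: "('n::finite) mexp \<Rightarrow> 'n mexp \<Rightarrow> real^'n" where
  "exp_point nu mu = (\<chi> j. real (nu j + mu j))"

definition newton_polyhedron :: "('n::finite) mixed \<Rightarrow> (real^'n) set" where
  "newton_polyhedron c = convex hull
     (\<Union>(nu, mu)\<in>mixed_support c. {x. \<forall>j. exp_point nu mu $ j \<le> x $ j})"

definition newton_boundary :: "('n::finite) mixed \<Rightarrow> (real^'n) set" where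
  "newton_boundary c = \<Union>{F. F face_of newton_polyhedron c \<and> compact F \<and> F \<noteq> {}}"

definition convenient :: "('n::finite) mixed \<Rightarrow> bool" where
  "convenient c \<longleftrightarrow>
     (\<forall>j. newton_boundary c \<inter> {x. \<forall>i. i \<noteq> j \<longrightarrow> x $ i = 0} \<noteq> {})"

definition weight_vector :: "('n::finite \<Rightarrow> nat) \<Rightarrow> bool" where
  "weight_vector P \<longleftrightarrow> (\<forall>j. P j > 0)"

definition wdot :: "('n::finite \<Rightarrow> nat) \<Rightarrow> real^'n \<Rightarrow> real" where
  "wdot P x = (\<Sum>j\<in>UNIV. real (P j) * x $ j)"

definition dP :: "('n::finite \<Rightarrow> nat) \<Rightarrow> 'n mixed \<Rightarrow> real" where
  "dP P c = Inf (wdot P ` newton_polyhedron c)"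

definition DeltaP :: "('n::finite \<Rightarrow> nat) \<Rightarrow> 'n mixed \<Rightarrow> (real^'n) set" where
  "DeltaP P c = {x \<in> newton_polyhedron c. wdot P x = dP P c}"

definition face_function :: "('n::finite \<Rightarrow> nat) \<Rightarrow> 'n mixed \<Rightarrow> 'n mixed" where
  "face_function P c = (\<lambda>nu mu. if exp_point nu mu \<in> DeltaP P c then c nu mu else 0)"

definition mixed_polynomial :: "('n::finite) mixed \<Rightarrow> bool" where
  "mixed_polynomial h \<longleftrightarrow> finite (mixed_support h)"

definition polar_wh_with :: "('n::finite) mixed \<Rightarrow> ('n \<Rightarrow> nat) \<Rightarrow> ('n \<Rightarrow> nat) \<Rightarrow> int \<Rightarrow> int \<Rightarrow> bool" where
  "polar_wh_with h Q P' mr mp \<longleftrightarrow> mixed_polynomial h \<and> weight_vector Q \<and> weight_vector P'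
     \<and> mr \<noteq> 0 \<and> mp \<noteq> 0
     \<and> (\<forall>(nu, mu)\<in>mixed_support h.
          (\<Sum>j\<in>UNIV. int (Q j) * int (nu j + mu j)) = mr
        \<and> (\<Sum>j\<in>UNIV. int (P' j) * (int (nu j) - int (mu j))) = mp)"

definition polar_weighted_homogeneous :: "('n::finite) mixed \<Rightarrow> bool" where
  "polar_weighted_homogeneous h \<longleftrightarrow> (\<exists>Q P' mr mp. polar_wh_with h Q P' mr mp)"

definition strongly_polar_positive_wh :: "('n::finite) mixed \<Rightarrow> ('n \<Rightarrow> nat) \<Rightarrow> bool" where
  "strongly_polar_positive_wh h P \<longleftrightarrow> (\<exists>mr mp. mp > 0 \<and> polar_wh_with h P P mr mp)"

definition polar_positive_wh_face_type :: "('n::finite) mixed \<Rightarrow> bool" where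
  "polar_positive_wh_face_type c \<longleftrightarrow>
     (\<forall>P. weight_vector P \<and> aff_dim (DeltaP P c) = int CARD('n) - 1 \<longrightarrow>
        (\<exists>Q P' mr mp. mp > 0 \<and> polar_wh_with (face_function P c) Q P' mr mp))"

definition strongly_polar_positive_wh_face_type :: "('n::finite) mixed \<Rightarrow> bool" where
  "strongly_polar_positive_wh_face_type c \<longleftrightarrow>
     (\<forall>P. weight_vector P \<and> aff_dim (DeltaP P c) = int CARD('n) - 1 \<longrightarrow>
        strongly_polar_positive_wh (face_function P c) P)"

end

theory Submission
  imports Defs
begin

text \<open>
  Fix a weight P and let T be the set of exponents of f lying on the face \<Delta>(P). The weights w
  for which T minimises the linear form w over the exponents of f form a polyhedral cone
  containing P. Walking inside this cone along directions orthogonal to w and to the tight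
  face, every positive w is a positive combination of weights that either have a vanishing
  coordinate or cut out a facet containing T (for integer weights, a weight vector P' with
  dim \<Delta>(P') = n - 1). Convenience forces, for a weight with a vanishing coordinate, that the
  points of T vanish wherever the weight does not. Both properties to be proved are stable under
  positive combinations: (1) "T lies in a facet, or T vanishes on the support of w" and (2)
  "w(\<nu> - \<mu>) is a non-negative constant on T, positive unless T vanishes on the support of w".
  At w = P the degenerate alternatives would force T = {0}, which is excluded since f(0) = 0.
\<close>

section \<open>Linear algebra in \<open>\<real>\<^sup>n\<close>\<close>

lemma finite_bounded_nat_funs: "finite {f :: 'n::finite \<Rightarrow> nat. \<forall>j. f j \<le> N}"
proof -
  have "{f :: 'n \<Rightarrow> nat. \<forall>j. f j \<le> N} = Pi\<^sub>E UNIV (\<lambda>_. {..N})"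
    by (auto simp: PiE_UNIV_domain Pi_def)
  thus ?thesis by (simp add: finite_PiE)
qed

text \<open>The normal vector is the vector of cofactors of the row completed to a basis.\<close>

lemma exists_integer_normal:
  fixes B :: "(real^'n::finite) set"
  assumes intB: "\<forall>b\<in>B. \<forall>j. b$j \<in> \<int>"
    and dimB: "dim B = CARD('n) - 1"
  shows "\<exists>N::real^'n. N \<noteq> 0 \<and> (\<forall>j. N$j \<in> \<int>) \<and> (\<forall>b\<in>B. N \<bullet> b = 0)"
proof -
  obtain B' where B': "B' \<subseteq> B" "independent B'" "B \<subseteq> span B'" "card B' = dim B"
    using basis_exists[of B] by blast
  have finB': "finite B'" using B'(2) finiteI_independent by blast
  obtain k :: 'n where True by simp
  have "card (UNIV - {k}) = card B'" using B'(4) dimB by (simp add: card_Diff_singleton)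
  then obtain g where g: "bij_betw g (UNIV - {k}) B'"
    using finite_same_card_bij[of "UNIV - {k}" B'] finB' by auto
  define M :: "real^'n \<Rightarrow> real^'n^'n" where "M x = (\<chi> i. if i = k then x else g i)" for x
  define N :: "real^'n" where "N = (\<chi> j. det (M (axis j 1)))"
  have det_M: "det (M x) = N \<bullet> x" for x
  proof -
    have "det (M x) = det (\<chi> i. if i = k then (\<Sum>j\<in>UNIV. (x$j) *s axis j 1) else g i)"
      unfolding M_def basis_expansion ..
    also have "\<dots> = (\<Sum>j\<in>UNIV. det (\<chi> i. if i = k then (x$j) *s axis j (1::real) else g i))"
      by (rule det_linear_row_sum) simp
    also have "\<dots> = (\<Sum>j\<in>UNIV. x$j * det (\<chi> i. if i = k then axis j (1::real) else g i))"
      by (simp add: det_row_mul)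
    also have "\<dots> = N \<bullet> x" unfolding N_def M_def inner_vec_def by (simp add: mult.commute)
    finally show ?thesis .
  qed
  have normal_B': "N \<bullet> b = 0" if b: "b \<in> B'" for b
  proof -
    obtain i where i: "i \<in> UNIV - {k}" "g i = b" using g b unfolding bij_betw_def by blast
    have "det (M b) = 0"
      by (rule det_identical_rows[of k i]) (use i in \<open>auto simp: M_def row_def\<close>)
    thus ?thesis using det_M by simp
  qed
  have normal_B: "N \<bullet> b = 0" if "b \<in> B" for b
  proof -
    have "orthogonal N b"
      by (rule orthogonal_to_span[of b B']) (use B'(3) that normal_B' in \<open>auto simp: orthogonal_def\<close>)
    thus ?thesis by (simp add: orthogonal_def)
  qed
  have dimB': "dim B' = CARD('n) - 1" using B' dimB dim_eq_card_independent by metis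
  hence "span B' \<noteq> UNIV"
    using dim_eq_full[of B'] by (metis DIM_cart DIM_real One_nat_def Suc_pred n_not_Suc_n
        nat_mult_1_right zero_less_card_finite)
  then obtain x where x: "x \<notin> span B'" by blast
  have "rows (M x) = insert x B'"
    using g unfolding rows_def M_def row_def bij_betw_def by (auto simp: vec_eq_iff)
  hence "dim (rows (M x)) = CARD('n)"
    using x dim_insert[of x B'] dimB' by simp
  hence "det (M x) \<noteq> 0" by (simp add: det_eq_0_rank row_rank_def)
  hence "N \<noteq> 0" using det_M by auto
  moreover have "N$j \<in> \<int>" for j
  proof -
    have "(M (axis j 1))$i$l \<in> \<int>" for i l
    proof (cases "i = k")
      case True thus ?thesis by (simp add: M_def axis_def)
    next
      case False
      hence "g i \<in> B" using g B'(1) unfolding bij_betw_def by auto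
      thus ?thesis using intB False by (simp add: M_def)
    qed
    thus ?thesis unfolding N_def det_def
      by (simp, intro Ints_sum Ints_mult Ints_prod) auto
  qed
  ultimately show ?thesis using normal_B by blast
qed

lemma orthogonal_hyperplane_parallel:
  fixes N w :: "real^'n::finite"
  assumes dimB: "dim B = CARD('n) - 1" and N: "N \<noteq> 0" "\<forall>b\<in>B. N \<bullet> b = 0"
    and w: "\<forall>b\<in>B. w \<bullet> b = 0"
  shows "\<exists>a. w = a *\<^sub>R N"
proof -
  have "N \<notin> span B"
  proof
    assume "N \<in> span B"
    hence "orthogonal N N" by (rule orthogonal_to_span) (use N in \<open>auto simp: orthogonal_def\<close>)
    thus False using N(1) by (simp add: orthogonal_def)
  qed
  hence "dim (insert N B) = CARD('n)" using dimB by (simp add: dim_insert)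
  hence span_UNIV: "span (insert N B) = UNIV" using dim_eq_full[of "insert N B"] by simp
  define a where "a = (w \<bullet> N) / (N \<bullet> N)"
  define x where "x = w - a *\<^sub>R N"
  have "x \<bullet> N = 0" unfolding x_def a_def using N(1) by (simp add: inner_diff_left)
  moreover have "x \<bullet> b = 0" if "b \<in> B" for b
    unfolding x_def using N(2) w that by (simp add: inner_diff_left)
  ultimately have "orthogonal x y" if "y \<in> span (insert N B)" for y
    by (intro orthogonal_to_span[OF that]) (auto simp: orthogonal_def)
  hence "x \<bullet> x = 0" using span_UNIV by (simp add: orthogonal_def)
  hence "w = a *\<^sub>R N" unfolding x_def by simp
  thus ?thesis ..
qed

lemma nonneg_orthogonal_positive_eq_0:
  fixes x w :: "real^'n::finite"
  assumes "\<forall>j. 0 < w$j" "x \<bullet> w = 0" "\<forall>k. 0 \<le> x$k"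
  shows "x = 0"
proof -
  have "(\<Sum>j\<in>UNIV. x$j * w$j) = 0" using assms(2) by (simp add: inner_vec_def)
  moreover have "\<forall>j\<in>UNIV. 0 \<le> x$j * w$j" using assms by (simp add: less_imp_le)
  ultimately have "\<forall>j\<in>UNIV. x$j * w$j = 0" by (subst (asm) sum_nonneg_eq_0_iff) auto
  thus ?thesis using assms(1) by (simp add: vec_eq_iff) (metis less_irrefl)
qed

lemma abs_scaled_inner_le:
  fixes u w s :: "real^'n::finite"
  assumes "\<And>j. d * \<bar>u$j\<bar> \<le> th * w$j" "\<And>j. 0 \<le> s$j" "0 \<le> d"
  shows "\<bar>d * (u \<bullet> s)\<bar> \<le> th * (w \<bullet> s)"
proof -
  have "\<bar>d * (u \<bullet> s)\<bar> = \<bar>\<Sum>j\<in>UNIV. d * u$j * s$j\<bar>"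
    by (simp add: inner_vec_def sum_distrib_left mult.assoc)
  also have "\<dots> \<le> (\<Sum>j\<in>UNIV. \<bar>d * u$j * s$j\<bar>)" by (rule sum_abs)
  also have "\<dots> \<le> (\<Sum>j\<in>UNIV. th * w$j * s$j)"
  proof (rule sum_mono)
    fix j
    have "\<bar>d * u$j * s$j\<bar> = d * \<bar>u$j\<bar> * s$j" using assms(2,3) by (simp add: abs_mult)
    also have "\<dots> \<le> th * w$j * s$j" using assms(1)[of j] assms(2)[of j] by (simp add: mult_right_mono)
    finally show "\<bar>d * u$j * s$j\<bar> \<le> th * w$j * s$j" .
  qed
  also have "\<dots> = th * (w \<bullet> s)"
    by (simp add: inner_vec_def sum_distrib_left mult.assoc)
  finally show ?thesis .
qed

lemma exists_small_step:
  fixes w u t0 :: "real^'n::finite"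
  assumes w: "\<forall>j. 0 < w$j" and th: "0 < th" and F: "finite F" "\<forall>s\<in>F. 0 < w \<bullet> (s - t0)"
  shows "\<exists>d>0. (\<forall>j. d * \<bar>u$j\<bar> \<le> th * w$j)
               \<and> (\<forall>s\<in>F. d * \<bar>u \<bullet> (s - t0)\<bar> \<le> w \<bullet> (s - t0))"
proof -
  define d1 where "d1 = Min (range (\<lambda>j. th * w$j / (\<bar>u$j\<bar>+1)))"
  define d2 where "d2 = Min (insert 1 ((\<lambda>s. w \<bullet> (s - t0) / (\<bar>u \<bullet> (s - t0)\<bar>+1)) ` F))"
  define d where "d = min d1 d2"
  have "0 < d1" unfolding d1_def using w th
    by (subst Min_gr_iff) (auto intro!: divide_pos_pos add_nonneg_pos)
  moreover have "0 < d2" unfolding d2_def using F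
    by (subst Min_gr_iff) (auto intro!: divide_pos_pos add_nonneg_pos)
  ultimately have d: "0 < d" unfolding d_def by simp
  have "d * \<bar>u$j\<bar> \<le> th * w$j" for j
  proof -
    have "d \<le> th * w$j / (\<bar>u$j\<bar>+1)" unfolding d_def d1_def
      by (rule min.coboundedI1, rule Min_le) auto
    hence "d * (\<bar>u$j\<bar>+1) \<le> th * w$j" by (simp add: field_simps)
    thus ?thesis using d by (simp add: algebra_simps)
  qed
  moreover have "d * \<bar>u \<bullet> (s - t0)\<bar> \<le> w \<bullet> (s - t0)" if "s \<in> F" for s
  proof -
    have "d \<le> w \<bullet> (s - t0) / (\<bar>u \<bullet> (s - t0)\<bar>+1)" unfolding d_def d2_def
      by (rule min.coboundedI2, rule Min_le) (use F that in auto)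
    hence "d * (\<bar>u \<bullet> (s - t0)\<bar>+1) \<le> w \<bullet> (s - t0)" by (simp add: field_simps)
    thus ?thesis using d by (simp add: algebra_simps)
  qed
  ultimately show ?thesis using d by blast
qed

section \<open>Cones of weights minimised on a set of lattice points\<close>

text \<open>For w in the cone, tight w is the set of all minimisers of w on E.\<close>

locale lattice_cone =
  fixes E :: "(real^'n::finite) set" and T :: "(real^'n) set" and t0 :: "real^'n"
  assumes nat_coords: "\<forall>s\<in>E. \<forall>j. \<exists>k::nat. s$j = real k"
    and T_subset: "T \<subseteq> E" and t0_in_T: "t0 \<in> T"
begin

definition cone :: "real^'n \<Rightarrow> bool" where
  "cone w \<longleftrightarrow> (\<forall>j. 0 \<le> w$j) \<and> (\<forall>s\<in>E. \<forall>t\<in>T. w \<bullet> t \<le> w \<bullet> s)"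

definition positive :: "real^'n \<Rightarrow> bool" where
  "positive w \<longleftrightarrow> (\<forall>j. 0 < w$j)"

definition tight :: "real^'n \<Rightarrow> (real^'n) set" where
  "tight w = {s\<in>E. w \<bullet> s = w \<bullet> t0}"

definition tight_diffs :: "real^'n \<Rightarrow> (real^'n) set" where
  "tight_diffs w = (\<lambda>s. s - t0) ` tight w"

lemma t0_in_E: "t0 \<in> E"
  using T_subset t0_in_T by auto

lemma nonneg_coords: "s \<in> E \<Longrightarrow> 0 \<le> s$j"
  using nat_coords by (metis of_nat_0_le_iff)

lemma inner_nonneg: "\<forall>j. 0 \<le> w$j \<Longrightarrow> s \<in> E \<Longrightarrow> 0 \<le> w \<bullet> s"
  unfolding inner_vec_def inner_real_def using nonneg_coords by (auto intro!: sum_nonneg)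

lemma cone_positive_iff: "cone w \<Longrightarrow> positive w \<longleftrightarrow> (\<forall>j. w$j \<noteq> 0)"
  unfolding cone_def positive_def by (force simp: order.strict_iff_order)

lemma cone_scaleR: "cone w \<Longrightarrow> 0 < a \<Longrightarrow> cone (a *\<^sub>R w)"
  unfolding cone_def by (auto simp: mult_left_mono)

lemma tight_diffs_scaleR: "a \<noteq> 0 \<Longrightarrow> tight_diffs (a *\<^sub>R w) = tight_diffs w"
  unfolding tight_diffs_def tight_def by auto

lemma finite_sublevel:
  assumes "positive w" shows "finite {s\<in>E. w \<bullet> s \<le> C}"
proof -
  define m where "m = Min (range (\<lambda>j. w$j))"
  have m: "0 < m" "\<And>j. m \<le> w$j" using assms unfolding m_def positive_def by auto
  define N where "N = nat \<lceil>C / m\<rceil>"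
  have "{s\<in>E. w \<bullet> s \<le> C} \<subseteq> (\<lambda>f. \<chi> j. real (f j)) ` {f. \<forall>j. f j \<le> N}"
  proof
    fix s assume s: "s \<in> {s\<in>E. w \<bullet> s \<le> C}"
    have "\<forall>j. \<exists>k::nat. s$j = real k" using nat_coords s by blast
    then obtain f where f: "\<And>j. s$j = real (f j)" by metis
    have "f j \<le> N" for j
    proof -
      have "w$j * s$j \<le> w \<bullet> s" unfolding inner_vec_def inner_real_def
        by (rule member_le_sum) (use assms s nonneg_coords[of s] in
            \<open>auto simp: positive_def intro: mult_nonneg_nonneg less_imp_le\<close>)
      hence "m * s$j \<le> C" using m(2)[of j] s nonneg_coords[of s j]
        by (smt (verit) mem_Collect_eq mult_right_mono)
      hence "s$j \<le> C / m" using m(1) by (simp add: field_simps)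
      thus ?thesis unfolding N_def using f[of j] by linarith
    qed
    moreover have "s = (\<chi> j. real (f j))" using f by (simp add: vec_eq_iff)
    ultimately show "s \<in> (\<lambda>f. \<chi> j. real (f j)) ` {f. \<forall>j. f j \<le> N}" by blast
  qed
  thus ?thesis using finite_subset finite_bounded_nat_funs by blast
qed

lemma T_subset_tight: "cone w \<Longrightarrow> T \<subseteq> tight w"
  unfolding cone_def tight_def using T_subset t0_in_T t0_in_E by (auto, smt (verit) subsetD)

lemma orthogonal_span_tight_diffs:
  assumes "\<forall>s\<in>tight w. u \<bullet> (s - t0) = 0" "x \<in> span (tight_diffs w)"
  shows "u \<bullet> x = 0"
proof -
  have "orthogonal u x"
    by (rule orthogonal_to_span[OF assms(2)])
       (use assms(1) in \<open>auto simp: tight_diffs_def orthogonal_def\<close>)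
  thus ?thesis by (simp add: orthogonal_def)
qed

text \<open>
  Moving a positive weight of the cone in a direction u orthogonal to its tight face keeps it in
  the cone for a short time: near points of E are handled one by one (there are finitely many),
  far points by comparing the perturbation with a fixed fraction th of w.
\<close>

lemma cone_add_small:
  assumes w: "positive w" "cone w" and u: "\<forall>s\<in>tight w. u \<bullet> (s - t0) = 0"
  shows "\<exists>d>0. cone (w + d *\<^sub>R u)"
proof -
  have w_nonneg: "\<forall>j. 0 \<le> w$j" using w(1) unfolding positive_def by (simp add: less_imp_le)
  define C where "C = w \<bullet> t0"
  have "0 \<le> C" unfolding C_def using inner_nonneg[OF w_nonneg t0_in_E] .
  define th :: real where "th = 1 / (2*C+2)"
  have th: "0 < th" "th \<le> 1/2" "th * (2*C+1) < 1"
    using \<open>0 \<le> C\<close> unfolding th_def by (auto simp: field_simps)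
  define F where "F = {s\<in>E. w \<bullet> s \<le> C+1} - tight w"
  have fin: "finite F" unfolding F_def using finite_sublevel[OF w(1)] by blast
  have F_pos: "\<forall>s\<in>F. 0 < w \<bullet> (s - t0)"
  proof
    fix s assume "s \<in> F"
    hence "w \<bullet> t0 \<le> w \<bullet> s" "w \<bullet> s \<noteq> w \<bullet> t0"
      using w(2) t0_in_T unfolding cone_def F_def tight_def by auto
    thus "0 < w \<bullet> (s - t0)" by (simp add: inner_diff_right)
  qed
  obtain d where d: "0 < d" "\<And>j. d * \<bar>u$j\<bar> \<le> th * w$j"
      "\<And>s. s \<in> F \<Longrightarrow> d * \<bar>u \<bullet> (s - t0)\<bar> \<le> w \<bullet> (s - t0)"
    using exists_small_step[OF _ th(1) fin F_pos, where u = u] w(1) unfolding positive_def by blast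
  have "cone (w + d *\<^sub>R u)"
    unfolding cone_def
  proof (intro conjI ballI allI)
    fix j
    have "\<bar>d * u$j\<bar> \<le> th * w$j" using d(1) d(2)[of j] by (simp add: abs_mult)
    moreover have "th * w$j \<le> w$j" using th w_nonneg by (intro mult_left_le_one_le) auto
    ultimately show "0 \<le> (w + d *\<^sub>R u) $ j" by simp
  next
    fix s t assume s: "s \<in> E" and t: "t \<in> T"
    have "t \<in> tight w" using T_subset_tight[OF w(2)] t by blast
    hence wt: "w \<bullet> t = C" and ut: "u \<bullet> t = u \<bullet> t0" using u unfolding tight_def C_def
      by (auto simp: inner_diff_right)
    have "0 \<le> w \<bullet> (s - t0) + d * (u \<bullet> (s - t0))"
    proof (cases "s \<in> tight w")
      case True thus ?thesis using u unfolding tight_def by (simp add: inner_diff_right)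
    next
      case not_tight: False
      show ?thesis
      proof (cases "w \<bullet> s \<le> C + 1")
        case True
        hence "s \<in> F" using s not_tight unfolding F_def by auto
        from d(3)[OF this] d(1) have "\<bar>d * (u \<bullet> (s - t0))\<bar> \<le> w \<bullet> (s - t0)"
          by (simp add: abs_mult)
        thus ?thesis by (simp add: abs_le_iff)
      next
        case False
        have "\<bar>d * (u \<bullet> s)\<bar> \<le> th * (w \<bullet> s)"
          by (rule abs_scaled_inner_le) (use d nonneg_coords[OF s] in auto)
        moreover have "\<bar>d * (u \<bullet> t0)\<bar> \<le> th * C"
          unfolding C_def by (rule abs_scaled_inner_le) (use d nonneg_coords[OF t0_in_E] in auto)
        moreover have "(1-th)*(C+1) \<le> (1-th)*(w \<bullet> s)" using False th by (intro mult_left_mono) auto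
        ultimately show ?thesis using th(3) by (simp add: C_def algebra_simps abs_le_iff)
      qed
    qed
    thus "(w + d *\<^sub>R u) \<bullet> t \<le> (w + d *\<^sub>R u) \<bullet> s"
      using wt ut unfolding C_def by (simp add: algebra_simps)
  qed
  thus ?thesis using d(1) by blast
qed

lemma cone_max_step:
  assumes w: "positive w" "cone w" and u: "\<forall>s\<in>tight w. u \<bullet> (s - t0) = 0" and k: "u$k < 0"
  obtains t where "t > 0" "cone (w + t *\<^sub>R u)" "\<And>t'. t' > t \<Longrightarrow> \<not> cone (w + t' *\<^sub>R u)"
proof -
  define I where "I = {t::real. 0 \<le> t \<and> cone (w + t *\<^sub>R u)}"
  have "I = {t. 0 \<le> t} \<inter> (\<Inter>j. {t. 0 \<le> w$j + t * u$j}) \<inter>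
      (\<Inter>s\<in>E. \<Inter>t'\<in>T. {t. w \<bullet> t' + t * (u \<bullet> t') \<le> w \<bullet> s + t * (u \<bullet> s)})"
    unfolding I_def cone_def by (auto simp: inner_add_left)
  hence "closed I"
    by (simp only:) (intro closed_Int closed_INT closed_Collect_le continuous_intros ballI)
  moreover have bdd: "bdd_above I"
  proof (rule bdd_aboveI)
    fix t assume "t \<in> I"
    hence "0 \<le> w$k + t * u$k" unfolding I_def cone_def by auto
    thus "t \<le> w$k / (- u$k)" using k by (simp add: field_simps)
  qed
  moreover obtain d where "d > 0" "cone (w + d *\<^sub>R u)" using cone_add_small[OF w u] by blast
  hence d: "d > 0" "d \<in> I" unfolding I_def by auto
  ultimately have "Sup I \<in> I" "d \<le> Sup I" using closed_contains_Sup cSup_upper by blast+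
  moreover have "\<not> cone (w + t' *\<^sub>R u)" if "t' > Sup I" for t'
    using that bdd cSup_upper[of t' I] \<open>Sup I \<in> I\<close> unfolding I_def by force
  ultimately show ?thesis using that[of "Sup I"] d(1) unfolding I_def by auto
qed

lemma cone_exit:
  assumes w: "positive w" "cone w" and u: "\<forall>s\<in>tight w. u \<bullet> (s - t0) = 0" and k: "u$k < 0"
  shows "\<exists>t>0. cone (w + t *\<^sub>R u) \<and> ((\<exists>j. (w + t *\<^sub>R u)$j = 0) \<or>
            (positive (w + t *\<^sub>R u) \<and> dim (tight_diffs w) < dim (tight_diffs (w + t *\<^sub>R u))))"
proof -
  obtain t where t: "t > 0" "cone (w + t *\<^sub>R u)" "\<And>t'. t' > t \<Longrightarrow> \<not> cone (w + t' *\<^sub>R u)"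
    using cone_max_step[OF assms] by blast
  define w' where "w' = w + t *\<^sub>R u"
  show ?thesis
  proof (cases "\<exists>j. w'$j = 0")
    case True thus ?thesis using t unfolding w'_def by blast
  next
    case False
    hence w': "positive w'" "cone w'" using t(2) cone_positive_iff unfolding w'_def by auto
    have "tight w \<subseteq> tight w'"
      using u unfolding tight_def w'_def by (auto simp: inner_add_left inner_diff_right)
    hence sub: "tight_diffs w \<subseteq> tight_diffs w'" unfolding tight_diffs_def by auto
    have "\<exists>s\<in>tight w'. s - t0 \<notin> span (tight_diffs w)"
    proof (rule ccontr)
      assume "\<not> ?thesis"
      hence "\<forall>s\<in>tight w'. u \<bullet> (s - t0) = 0" using orthogonal_span_tight_diffs[OF u] by blast
      then obtain d where "d > 0" "cone (w' + d *\<^sub>R u)" using cone_add_small[OF w'] by blast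
      thus False using t(3)[of "t + d"] by (simp add: w'_def scaleR_add_left add.assoc)
    qed
    then obtain s where s: "s \<in> tight w'" "s - t0 \<notin> span (tight_diffs w)" by blast
    have "span (tight_diffs w) \<subset> span (tight_diffs w')"
    proof
      show "span (tight_diffs w) \<subseteq> span (tight_diffs w')" using sub by (rule span_mono)
      have "s - t0 \<in> span (tight_diffs w')" using s(1) unfolding tight_diffs_def by (intro span_base) auto
      thus "span (tight_diffs w) \<noteq> span (tight_diffs w')" using s(2) by blast
    qed
    hence "dim (tight_diffs w) < dim (tight_diffs w')" by (rule dim_psubset)
    thus ?thesis using t w' unfolding w'_def by blast
  qed
qed


lemma cone_split:
  assumes w: "positive w" "cone w" and low_dim: "dim (tight_diffs w) < CARD('n) - 1"
  obtains x t1 t2 where "0 < t1" "0 < t2"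
    "cone (w + t1 *\<^sub>R x)" "(\<exists>j. (w + t1 *\<^sub>R x)$j = 0) \<or>
       (positive (w + t1 *\<^sub>R x) \<and> dim (tight_diffs w) < dim (tight_diffs (w + t1 *\<^sub>R x)))"
    "cone (w - t2 *\<^sub>R x)" "(\<exists>j. (w - t2 *\<^sub>R x)$j = 0) \<or>
       (positive (w - t2 *\<^sub>R x) \<and> dim (tight_diffs w) < dim (tight_diffs (w - t2 *\<^sub>R x)))"
proof -
  have "dim (insert w (tight_diffs w)) \<le> dim (tight_diffs w) + 1" by (simp add: dim_insert)
  hence "dim (insert w (tight_diffs w)) < DIM(real^'n)" using low_dim by simp
  then obtain x where x: "x \<noteq> 0" "\<And>y. y \<in> span (insert w (tight_diffs w)) \<Longrightarrow> orthogonal x y"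
    using orthogonal_to_subspace_exists by blast
  have xw: "x \<bullet> w = 0" using x(2)[of w] by (simp add: span_base orthogonal_def)
  have x_tight: "\<forall>s\<in>tight w. x \<bullet> (s - t0) = 0" "\<forall>s\<in>tight w. (-x) \<bullet> (s - t0) = 0"
    using x(2) by (auto simp: tight_diffs_def orthogonal_def intro!: span_base)
  have w_pos: "\<forall>j. 0 < w$j" using w(1) unfolding positive_def by simp
  obtain k1 where "x$k1 < 0"
    using nonneg_orthogonal_positive_eq_0[OF w_pos xw] x(1) by (meson not_le)
  from cone_exit[OF w x_tight(1) this] obtain t1 where t1: "t1 > 0" "cone (w + t1 *\<^sub>R x)"
    "(\<exists>j. (w + t1 *\<^sub>R x)$j = 0) \<or>
       (positive (w + t1 *\<^sub>R x) \<and> dim (tight_diffs w) < dim (tight_diffs (w + t1 *\<^sub>R x)))"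
    by blast
  obtain k2 where "(-x)$k2 < 0"
    using nonneg_orthogonal_positive_eq_0[OF w_pos, of "-x"] xw x(1)
    by simp (meson neg_0_le_iff_le not_le)
  from cone_exit[OF w x_tight(2) this] obtain t2 where t2: "t2 > 0" "cone (w - t2 *\<^sub>R x)"
    "(\<exists>j. (w - t2 *\<^sub>R x)$j = 0) \<or>
       (positive (w - t2 *\<^sub>R x) \<and> dim (tight_diffs w) < dim (tight_diffs (w - t2 *\<^sub>R x)))"
    by auto
  show ?thesis using that[OF t1(1) t2(1) t1(2,3) t2(2,3)] .
qed

lemma cone_induct:
  assumes combination: "\<And>u v a b. R u \<Longrightarrow> R v \<Longrightarrow> 0 \<le> a \<Longrightarrow> 0 \<le> b \<Longrightarrow> R (a *\<^sub>R u + b *\<^sub>R v)"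
    and boundary: "\<And>w. cone w \<Longrightarrow> \<exists>j. w$j = 0 \<Longrightarrow> R w"
    and facet: "\<And>w. cone w \<Longrightarrow> positive w \<Longrightarrow> CARD('n) - 1 \<le> dim (tight_diffs w) \<Longrightarrow> R w"
    and w: "cone w"
  shows "R w"
proof (cases "\<exists>j. w$j = 0")
  case True thus ?thesis using boundary w by blast
next
  case False
  hence "positive w" using w cone_positive_iff by blast
  moreover have "positive w \<Longrightarrow> cone w \<Longrightarrow> CARD('n) - dim (tight_diffs w) = m \<Longrightarrow> R w" for m w
  proof (induction m arbitrary: w rule: less_induct)
    case (less m w)
    have R_exit: "R w'" if "cone w'" "(\<exists>j. w'$j = 0) \<or>
        (positive w' \<and> dim (tight_diffs w) < dim (tight_diffs w'))" for w'
    proof (cases "\<exists>j. w'$j = 0")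
      case True thus ?thesis using boundary that by blast
    next
      case False
      hence "positive w'" "dim (tight_diffs w) < dim (tight_diffs w')" using that by auto
      moreover have "dim (tight_diffs w') \<le> CARD('n)" by (rule dim_subset_UNIV_cart)
      ultimately show ?thesis using less.IH[of "CARD('n) - dim (tight_diffs w')" w'] less.prems that
        by auto
    qed
    show ?case
    proof (cases "CARD('n) - 1 \<le> dim (tight_diffs w)")
      case True thus ?thesis using facet less.prems by blast
    next
      case False
      then obtain x t1 t2 where t: "0 < t1" "0 < t2"
          and R1: "R (w + t1 *\<^sub>R x)" and R2: "R (w - t2 *\<^sub>R x)"
        using cone_split[OF less.prems(1,2)] R_exit by (metis not_le)
      have "t1/(t1+t2) + t2/(t1+t2) = 1" using t by (simp add: add_divide_distrib[symmetric])
      hence "w = (t2/(t1+t2)) *\<^sub>R (w + t1 *\<^sub>R x) + (t1/(t1+t2)) *\<^sub>R (w - t2 *\<^sub>R x)"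
        by (simp add: algebra_simps) (simp add: scaleR_add_left[symmetric])
      thus ?thesis using combination[OF R1 R2] t by (metis divide_nonneg_pos less_imp_le add_pos_pos)
    qed
  qed
  ultimately show ?thesis using w by blast
qed


lemma codim1_integer_direction:
  assumes w: "cone w" "positive w" and dim_ge: "CARD('n) - 1 \<le> dim (tight_diffs w)"
  obtains M a where "\<forall>j. M$j \<in> \<int> \<and> 0 < M$j" "0 < a" "w = a *\<^sub>R M"
    "dim (tight_diffs w) = CARD('n) - 1"
proof -
  have w0: "w \<noteq> 0" using w(2) unfolding positive_def by (metis less_irrefl zero_index)
  have w_tight: "\<forall>b\<in>tight_diffs w. w \<bullet> b = 0"
    unfolding tight_diffs_def tight_def by (simp add: inner_diff_right)
  have integer: "\<forall>b\<in>tight_diffs w. \<forall>j. b$j \<in> \<int>"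
  proof (intro ballI allI)
    fix b j assume "b \<in> tight_diffs w"
    then obtain s where s: "s \<in> E" "b = s - t0" unfolding tight_diffs_def tight_def by auto
    obtain k1 k2 :: nat where "s$j = real k1" "t0$j = real k2" using nat_coords s(1) t0_in_E by metis
    thus "b$j \<in> \<int>" using s(2) by simp
  qed
  have "span (tight_diffs w) \<noteq> UNIV"
  proof
    assume "span (tight_diffs w) = UNIV"
    hence "w \<bullet> w = 0" using orthogonal_span_tight_diffs[of w w w] w_tight
      unfolding tight_diffs_def by auto
    thus False using w0 by simp
  qed
  hence "dim (tight_diffs w) \<noteq> CARD('n)" using dim_eq_full[of "tight_diffs w"] by simp
  moreover have "dim (tight_diffs w) \<le> CARD('n)" by (rule dim_subset_UNIV_cart)
  ultimately have dim_eq: "dim (tight_diffs w) = CARD('n) - 1" using dim_ge by linarith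
  obtain N where N: "N \<noteq> 0" "\<forall>j. N$j \<in> \<int>" "\<forall>b\<in>tight_diffs w. N \<bullet> b = 0"
    using exists_integer_normal[OF integer dim_eq] by blast
  obtain a0 where a0: "w = a0 *\<^sub>R N"
    using orthogonal_hyperplane_parallel[OF dim_eq N(1,3) w_tight] by blast
  hence "a0 \<noteq> 0" using w0 by auto
  define M where "M = sgn a0 *\<^sub>R N"
  have w_eq: "w = \<bar>a0\<bar> *\<^sub>R M" unfolding M_def using a0 by (simp add: abs_mult_sgn)
  have "0 < M$j" for j
  proof -
    have "w$j = \<bar>a0\<bar> * M$j" using w_eq by simp
    moreover have "0 < w$j" using w(2) unfolding positive_def by blast
    ultimately have "0 < \<bar>a0\<bar> * M$j" by simp
    thus ?thesis using \<open>a0 \<noteq> 0\<close> by (simp add: zero_less_mult_iff)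
  qed
  moreover have "M$j \<in> \<int>" for j unfolding M_def using N(2) \<open>a0 \<noteq> 0\<close>
    by (cases "a0 > 0") auto
  ultimately show ?thesis using that[of M "\<bar>a0\<bar>"] w_eq \<open>a0 \<noteq> 0\<close> dim_eq by auto
qed

end

section \<open>Newton polyhedra and face functions\<close>

definition support_points :: "('n::finite) mixed \<Rightarrow> (real^'n) set" where
  "support_points c = {exp_point nu mu | nu mu. (nu, mu) \<in> mixed_support c}"

definition weight_vec :: "('n::finite \<Rightarrow> nat) \<Rightarrow> real^'n" where
  "weight_vec P = (\<chi> j. real (P j))"

definition exp_diff :: "('n::finite) mexp \<Rightarrow> 'n mexp \<Rightarrow> real^'n" where
  "exp_diff nu mu = (\<chi> j. real (nu j) - real (mu j))"

lemma wdot_eq_inner: "wdot P x = weight_vec P \<bullet> x"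
  by (simp add: wdot_def weight_vec_def inner_vec_def)

lemma exp_point_nth [simp]: "exp_point nu mu $ j = real (nu j + mu j)"
  by (simp add: exp_point_def)

lemma inner_weight_vec_exp_point:
  "weight_vec P \<bullet> exp_point nu mu = real_of_int (\<Sum>j\<in>UNIV. int (P j) * int (nu j + mu j))"
  by (simp add: inner_vec_def weight_vec_def)

lemma inner_weight_vec_exp_diff:
  "weight_vec P \<bullet> exp_diff nu mu = real_of_int (\<Sum>j\<in>UNIV. int (P j) * (int (nu j) - int (mu j)))"
  by (simp add: inner_vec_def weight_vec_def exp_diff_def)

lemma weight_vec_eq_integer_vector:
  assumes "\<forall>j. M$j \<in> \<int> \<and> 0 < M$j"
  shows "\<exists>P. weight_vector P \<and> weight_vec P = M"
proof -
  have "\<exists>k::nat. 0 < k \<and> M$j = real k" for j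
  proof -
    obtain z where "M$j = of_int z" using assms Ints_cases by metis
    thus ?thesis using assms[rule_format, of j] by (intro exI[of _ "nat z"]) auto
  qed
  then obtain P where "\<forall>j. 0 < P j \<and> M$j = real (P j)" using choice[of "\<lambda>j k. 0 < k \<and> M$j = real k"] by blast
  thus ?thesis unfolding weight_vector_def weight_vec_def by (auto simp: vec_eq_iff)
qed

lemma support_points_nat_coords: "\<forall>s\<in>support_points c. \<forall>j. \<exists>k::nat. s$j = real k"
  unfolding support_points_def by (auto intro!: exI[of _ "_ + _"])

lemma support_points_nonneg: "s \<in> support_points c \<Longrightarrow> 0 \<le> s$j"
  unfolding support_points_def by auto

lemma support_points_subset_newton_polyhedron: "support_points c \<subseteq> newton_polyhedron c"
  unfolding support_points_def newton_polyhedron_def by (auto intro!: hull_inc)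

lemma newton_polyhedron_lower_bound:
  assumes w: "\<forall>j. 0 \<le> w$j" and m: "\<forall>s\<in>support_points c. m \<le> w \<bullet> s"
    and z: "z \<in> newton_polyhedron c"
  shows "m \<le> w \<bullet> z"
proof -
  have "newton_polyhedron c \<subseteq> {x. m \<le> w \<bullet> x}"
    unfolding newton_polyhedron_def
  proof (rule hull_minimal)
    show "convex {x. m \<le> w \<bullet> x}" using convex_halfspace_ge[of m w] by simp
    show "(\<Union>(nu, mu)\<in>mixed_support c. {x. \<forall>j. exp_point nu mu $ j \<le> x $ j}) \<subseteq> {x. m \<le> w \<bullet> x}"
    proof clarify
      fix nu mu x assume nm: "(nu, mu) \<in> mixed_support c" and x: "\<forall>j. exp_point nu mu $ j \<le> x $ j"
      have "m \<le> w \<bullet> exp_point nu mu" using m nm unfolding support_points_def by blast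
      also have "\<dots> \<le> w \<bullet> x" unfolding inner_vec_def inner_real_def
        by (rule sum_mono) (use w x in \<open>auto intro: mult_left_mono\<close>)
      finally show "m \<le> w \<bullet> x" .
    qed
  qed
  thus ?thesis using z by auto
qed

lemma dP_le:
  assumes "x \<in> newton_polyhedron c" shows "dP P c \<le> weight_vec P \<bullet> x"
proof -
  have nonneg: "\<forall>j. 0 \<le> weight_vec P $ j" by (simp add: weight_vec_def)
  have "\<forall>s\<in>support_points c. 0 \<le> weight_vec P \<bullet> s"
    using nonneg support_points_nonneg
    unfolding inner_vec_def inner_real_def by (auto intro!: sum_nonneg mult_nonneg_nonneg)
  hence "0 \<le> wdot P x" if "x \<in> newton_polyhedron c" for x
    using newton_polyhedron_lower_bound[OF nonneg _ that] by (simp add: wdot_eq_inner)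
  hence "bdd_below (wdot P ` newton_polyhedron c)" by (intro bdd_belowI[of _ 0]) blast
  thus ?thesis unfolding dP_def using assms by (metis cInf_lower image_eqI wdot_eq_inner)
qed

lemma minimiser_in_DeltaP:
  assumes t: "t \<in> support_points c"
    and min: "\<forall>s\<in>support_points c. weight_vec P \<bullet> t \<le> weight_vec P \<bullet> s"
  shows "dP P c = weight_vec P \<bullet> t" "t \<in> DeltaP P c"
proof -
  have t_newton: "t \<in> newton_polyhedron c" using t support_points_subset_newton_polyhedron by blast
  show d: "dP P c = weight_vec P \<bullet> t" unfolding dP_def
  proof (rule cInf_eq_minimum)
    show "weight_vec P \<bullet> t \<in> wdot P ` newton_polyhedron c" using t_newton by (auto simp: wdot_eq_inner)
    fix x assume "x \<in> wdot P ` newton_polyhedron c"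
    thus "weight_vec P \<bullet> t \<le> x"
      using newton_polyhedron_lower_bound[OF _ min] by (auto simp: wdot_eq_inner weight_vec_def)
  qed
  show "t \<in> DeltaP P c" unfolding DeltaP_def using t_newton d by (simp add: wdot_eq_inner)
qed

text \<open>
  For a convenient f, a non-negative weight w vanishing at some coordinate k has minimum 0,
  attained on the k-th axis; so its minimisers vanish wherever w does not.
\<close>

lemma convenient_minimiser_vanishes:
  assumes conv: "convenient c" and w: "\<forall>j. 0 \<le> w$j" and k: "w$k = 0"
    and t: "t \<in> support_points c" and min: "\<forall>s\<in>support_points c. w \<bullet> t \<le> w \<bullet> s"
    and j: "0 < w$j"
  shows "t$j = 0"
proof -
  obtain y where y: "y \<in> newton_boundary c" "\<forall>i. i \<noteq> k \<longrightarrow> y$i = 0"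
    using conv unfolding convenient_def by blast
  have "y \<in> newton_polyhedron c"
    using y(1) face_of_imp_subset unfolding newton_boundary_def by blast
  hence "w \<bullet> t \<le> w \<bullet> y" by (rule newton_polyhedron_lower_bound[OF w min])
  moreover have "w \<bullet> y = 0" unfolding inner_vec_def inner_real_def using y(2) k
    by (intro sum.neutral) auto
  ultimately have "(\<Sum>i\<in>UNIV. w$i * t$i) \<le> 0" by (simp add: inner_vec_def)
  moreover have t_nonneg: "\<forall>i. 0 \<le> t$i" using t support_points_nonneg by blast
  ultimately have "(\<Sum>i\<in>UNIV. w$i * t$i) = 0"
    using w by (metis (no_types, lifting) antisym mult_nonneg_nonneg sum_nonneg)
  hence "\<forall>i\<in>UNIV. w$i * t$i = 0" using w t_nonneg by (subst (asm) sum_nonneg_eq_0_iff) auto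
  thus ?thesis using j by (metis UNIV_I less_irrefl mult_eq_0_iff)
qed

lemma mixed_support_face_function:
  "mixed_support (face_function P c) = {(nu, mu) \<in> mixed_support c. exp_point nu mu \<in> DeltaP P c}"
  by (auto simp: mixed_support_def face_function_def)

lemma face_function_radial_degree:
  assumes "(nu, mu) \<in> mixed_support (face_function P c)"
  shows "real_of_int (\<Sum>j\<in>UNIV. int (P j) * int (nu j + mu j)) = dP P c"
  using assms inner_weight_vec_exp_point[of P nu mu]
  by (simp add: mixed_support_face_function DeltaP_def wdot_eq_inner)

lemma mixed_polynomial_face_function:
  assumes P: "weight_vector P" shows "mixed_polynomial (face_function P c)"
proof -
  define N where "N = nat \<lceil>dP P c\<rceil>"
  have "mixed_support (face_function P c) \<subseteq> {f. \<forall>j. f j \<le> N} \<times> {f. \<forall>j. f j \<le> N}"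
  proof
    fix x assume "x \<in> mixed_support (face_function P c)"
    moreover obtain nu mu where x: "x = (nu, mu)" by (cases x)
    ultimately have nm: "(nu, mu) \<in> mixed_support (face_function P c)" by simp
    have "nu j \<le> N \<and> mu j \<le> N" for j
    proof -
      have "1 \<le> int (P j)" using P unfolding weight_vector_def by (simp add: Suc_le_eq)
      hence "int (nu j + mu j) \<le> int (P j) * int (nu j + mu j)"
        using mult_right_mono[of 1 "int (P j)" "int (nu j + mu j)"] by simp
      also have "\<dots> \<le> (\<Sum>j\<in>UNIV. int (P j) * int (nu j + mu j))"
        by (rule member_le_sum) auto
      finally have "real (nu j + mu j) \<le> dP P c"
        using face_function_radial_degree[OF nm] by linarith
      hence "nu j + mu j \<le> N" unfolding N_def by linarith
      thus ?thesis by simp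
    qed
    thus "x \<in> {f. \<forall>j. f j \<le> N} \<times> {f. \<forall>j. f j \<le> N}" unfolding x by simp
  qed
  thus ?thesis unfolding mixed_polynomial_def
    by (rule finite_subset) (intro finite_cartesian_product finite_bounded_nat_funs)
qed

locale newton_cone = lattice_cone "support_points c" T t0
  for c :: "('n::finite) mixed" and T t0
begin

lemma facet_weight:
  assumes w: "cone w" "positive w" and dim_ge: "CARD('n) - 1 \<le> dim (tight_diffs w)"
  obtains P a where "weight_vector P" "0 < a" "w = a *\<^sub>R weight_vec P"
    "aff_dim (DeltaP P c) = int CARD('n) - 1" "T \<subseteq> DeltaP P c"
proof -
  obtain M a where M: "\<forall>j. M$j \<in> \<int> \<and> 0 < M$j" and a: "0 < a" "w = a *\<^sub>R M"
      and dim_eq: "dim (tight_diffs w) = CARD('n) - 1"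
    using codim1_integer_direction[OF w dim_ge] by blast
  obtain P where P: "weight_vector P" "weight_vec P = M"
    using weight_vec_eq_integer_vector[OF M] by blast
  have "cone (weight_vec P)" using cone_scaleR[OF w(1), of "1/a"] a P(2) by simp
  hence minimal: "\<forall>s\<in>support_points c. weight_vec P \<bullet> t \<le> weight_vec P \<bullet> s" if "t \<in> T" for t
    using that unfolding cone_def by blast
  have T_Delta: "T \<subseteq> DeltaP P c" using minimiser_in_DeltaP(2)[OF _ minimal] T_subset by blast
  have dP_t0: "dP P c = weight_vec P \<bullet> t0" using minimiser_in_DeltaP(1)[OF t0_in_E minimal[OF t0_in_T]] .
  have tight_Delta: "tight (weight_vec P) \<subseteq> DeltaP P c"
    using support_points_subset_newton_polyhedron dP_t0
    unfolding tight_def DeltaP_def by (auto simp: wdot_eq_inner)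
  have "t0 \<in> tight (weight_vec P)" unfolding tight_def using t0_in_E by simp
  hence "aff_dim (tight (weight_vec P)) = int (dim (tight_diffs (weight_vec P)))"
    unfolding tight_diffs_def by (intro aff_dim_eq_dim_subtract hull_inc)
  also have "tight_diffs (weight_vec P) = tight_diffs w"
    using tight_diffs_scaleR[of a "weight_vec P"] a P(2) by simp
  finally have "int CARD('n) - 1 \<le> aff_dim (DeltaP P c)"
    using aff_dim_subset[OF tight_Delta] dim_eq by simp
  moreover have "weight_vec P \<noteq> 0"
  proof
    assume "weight_vec P = 0"
    hence "M $ undefined = 0" using P(2) by simp
    thus False using M by (metis less_irrefl)
  qed
  hence "aff_dim {x. weight_vec P \<bullet> x = dP P c} = int CARD('n) - 1"
    using aff_dim_hyperplane by simp
  hence "aff_dim (DeltaP P c) \<le> int CARD('n) - 1"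
    using aff_dim_subset[of "DeltaP P c" "{x. weight_vec P \<bullet> x = dP P c}"]
    unfolding DeltaP_def by (auto simp: wdot_eq_inner)
  ultimately show ?thesis using that[OF P(1) a(1)] a(2) P(2) T_Delta by simp
qed

end

locale weight_face = newton_cone c T t0 for c :: "('n::finite) mixed" and T t0 +
  fixes P :: "'n \<Rightarrow> nat"
  assumes convenient: "convenient c" and weight: "weight_vector P"
    and T_eq: "T = support_points c \<inter> DeltaP P c" and t0_nonzero: "t0 \<noteq> 0"
begin

definition degenerate :: "real^'n \<Rightarrow> bool" where
  "degenerate w \<longleftrightarrow> (\<forall>j. 0 < w$j \<longrightarrow> (\<forall>t\<in>T. t$j = 0))"

lemma cone_weight_vec: "cone (weight_vec P)"
  unfolding cone_def
proof (intro conjI ballI allI)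
  fix j show "0 \<le> weight_vec P $ j" by (simp add: weight_vec_def)
next
  fix s t assume "s \<in> support_points c" "t \<in> T"
  thus "weight_vec P \<bullet> t \<le> weight_vec P \<bullet> s"
    using T_eq dP_le[of s c P] support_points_subset_newton_polyhedron
    unfolding DeltaP_def by (auto simp: wdot_eq_inner)
qed

lemma weight_vec_not_degenerate: "\<not> degenerate (weight_vec P)"
  using t0_nonzero t0_in_T weight unfolding degenerate_def weight_vector_def weight_vec_def
  by (auto simp: vec_eq_iff)

lemma boundary_degenerate:
  assumes w: "cone w" and k: "w$k = 0" shows "degenerate w"
  unfolding degenerate_def
proof (intro allI impI ballI)
  fix j t assume "0 < w$j" "t \<in> T"
  thus "t$j = 0"
    using convenient_minimiser_vanishes[OF convenient _ k, of t] w T_subset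
    unfolding cone_def by blast
qed

lemma degenerate_combination:
  assumes "degenerate u" "degenerate v" "0 \<le> a" "0 \<le> b"
  shows "degenerate (a *\<^sub>R u + b *\<^sub>R v)"
  unfolding degenerate_def
proof (intro allI impI)
  fix j assume "0 < (a *\<^sub>R u + b *\<^sub>R v)$j"
  hence "0 < a * u$j \<or> 0 < b * v$j" by simp linarith
  hence "0 < u$j \<or> 0 < v$j" using assms(3,4) by (auto simp: zero_less_mult_iff)
  thus "\<forall>t\<in>T. t$j = 0" using assms(1,2) unfolding degenerate_def by blast
qed

lemma exists_facet_containing:
  obtains P' where "weight_vector P'" "aff_dim (DeltaP P' c) = int CARD('n) - 1" "T \<subseteq> DeltaP P' c"
proof -
  define in_facet where "in_facet \<longleftrightarrow>
    (\<exists>P'. weight_vector P' \<and> aff_dim (DeltaP P' c) = int CARD('n) - 1 \<and> T \<subseteq> DeltaP P' c)"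
  have "in_facet \<or> degenerate (weight_vec P)"
  proof (rule cone_induct[where R = "\<lambda>w. in_facet \<or> degenerate w", OF _ _ _ cone_weight_vec])
    fix u v :: "real^'n" and a b :: real
    assume "in_facet \<or> degenerate u" "in_facet \<or> degenerate v" "0 \<le> a" "0 \<le> b"
    thus "in_facet \<or> degenerate (a *\<^sub>R u + b *\<^sub>R v)" using degenerate_combination by blast
  next
    fix w assume "cone w" "\<exists>j. w$j = 0"
    thus "in_facet \<or> degenerate w" using boundary_degenerate by blast
  next
    fix w assume w: "cone w" "positive w" "CARD('n) - 1 \<le> dim (tight_diffs w)"
    show "in_facet \<or> degenerate w"
      using facet_weight[OF w] unfolding in_facet_def by blast
  qed
  thus ?thesis using that weight_vec_not_degenerate unfolding in_facet_def by blast
qed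


definition polar_level :: "real^'n \<Rightarrow> real \<Rightarrow> bool" where
  "polar_level w m \<longleftrightarrow> (\<forall>nu mu. (nu, mu) \<in> mixed_support c \<longrightarrow> exp_point nu mu \<in> T
     \<longrightarrow> w \<bullet> exp_diff nu mu = m)"

lemma polar_level_combination:
  assumes u: "polar_level u m1" "0 \<le> m1" "m1 = 0 \<longrightarrow> degenerate u"
    and v: "polar_level v m2" "0 \<le> m2" "m2 = 0 \<longrightarrow> degenerate v"
    and a: "0 \<le> a" and b: "0 \<le> b"
  shows "polar_level (a *\<^sub>R u + b *\<^sub>R v) (a * m1 + b * m2)"
    and "a * m1 + b * m2 = 0 \<longrightarrow> degenerate (a *\<^sub>R u + b *\<^sub>R v)"
proof -
  show "polar_level (a *\<^sub>R u + b *\<^sub>R v) (a * m1 + b * m2)"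
    using u(1) v(1) unfolding polar_level_def by (simp add: inner_add_left)
  show "a * m1 + b * m2 = 0 \<longrightarrow> degenerate (a *\<^sub>R u + b *\<^sub>R v)"
  proof
    assume "a * m1 + b * m2 = 0"
    hence "a * m1 = 0" "b * m2 = 0" using a b u(2) v(2)
      by (smt (verit) mult_nonneg_nonneg)+
    show "degenerate (a *\<^sub>R u + b *\<^sub>R v)"
      unfolding degenerate_def
    proof (intro allI impI)
      fix j assume "0 < (a *\<^sub>R u + b *\<^sub>R v)$j"
      hence "0 < a * u$j \<or> 0 < b * v$j" by simp linarith
      hence "(0 < a \<and> 0 < u$j) \<or> (0 < b \<and> 0 < v$j)" using a b by (auto simp: zero_less_mult_iff)
      thus "\<forall>t\<in>T. t$j = 0"
        using \<open>a * m1 = 0\<close> \<open>b * m2 = 0\<close> u(3) v(3) unfolding degenerate_def by auto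
    qed
  qed
qed

lemma degenerate_polar_level_0:
  assumes w: "cone w" and deg: "degenerate w" shows "polar_level w 0"
  unfolding polar_level_def
proof (intro allI impI)
  fix nu mu assume "(nu, mu) \<in> mixed_support c" "exp_point nu mu \<in> T"
  have "w$j * exp_diff nu mu $ j = 0" for j
  proof (cases "w$j = 0")
    case False
    moreover have "0 \<le> w$j" using w unfolding cone_def by blast
    ultimately have "0 < w$j" by linarith
    hence "exp_point nu mu $ j = 0" using deg \<open>exp_point nu mu \<in> T\<close> unfolding degenerate_def by blast
    thus ?thesis by (simp add: exp_diff_def)
  qed simp
  thus "w \<bullet> exp_diff nu mu = 0" unfolding inner_vec_def inner_real_def by (intro sum.neutral) simp
qed

lemma positive_polar_level:
  assumes H: "strongly_polar_positive_wh_face_type c"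
  obtains m where "0 < m" "polar_level (weight_vec P) m"
proof -
  define R where "R w \<longleftrightarrow> (\<exists>m\<ge>0. polar_level w m \<and> (m = 0 \<longrightarrow> degenerate w))" for w
  have "R (weight_vec P)"
  proof (rule cone_induct[of R, OF _ _ _ cone_weight_vec])
    fix u v :: "real^'n" and a b :: real assume "R u" "R v" and ab: "0 \<le> a" "0 \<le> b"
    then obtain m1 m2 where u: "polar_level u m1" "0 \<le> m1" "m1 = 0 \<longrightarrow> degenerate u"
        and v: "polar_level v m2" "0 \<le> m2" "m2 = 0 \<longrightarrow> degenerate v"
      unfolding R_def by blast
    have "0 \<le> a * m1 + b * m2" using u(2) v(2) ab by simp
    thus "R (a *\<^sub>R u + b *\<^sub>R v)"
      unfolding R_def using polar_level_combination[OF u v ab] by blast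
  next
    fix w assume w: "cone w" "\<exists>j. w$j = 0"
    hence "degenerate w" using boundary_degenerate by blast
    thus "R w" unfolding R_def using degenerate_polar_level_0[OF w(1)] by blast
  next
    fix w assume "cone w" "positive w" "CARD('n) - 1 \<le> dim (tight_diffs w)"
    from facet_weight[OF this] obtain P' a where P': "weight_vector P'" "0 < a"
      "w = a *\<^sub>R weight_vec P'" "aff_dim (DeltaP P' c) = int CARD('n) - 1" "T \<subseteq> DeltaP P' c" .
    from H P'(1,4) obtain mr mp where mp: "0 < mp" "polar_wh_with (face_function P' c) P' P' mr mp"
      unfolding strongly_polar_positive_wh_face_type_def strongly_polar_positive_wh_def by blast
    have "polar_level w (a * real_of_int mp)"
      unfolding polar_level_def
    proof (intro allI impI)
      fix nu mu assume "(nu, mu) \<in> mixed_support c" "exp_point nu mu \<in> T"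
      hence "(nu, mu) \<in> mixed_support (face_function P' c)"
        using P'(5) by (auto simp: mixed_support_face_function)
      hence "(\<Sum>j\<in>UNIV. int (P' j) * (int (nu j) - int (mu j))) = mp"
        using mp(2) unfolding polar_wh_with_def by blast
      thus "w \<bullet> exp_diff nu mu = a * real_of_int mp"
        using P'(3) inner_weight_vec_exp_diff[of P' nu mu] by simp
    qed
    moreover have "0 < a * real_of_int mp" using mp(1) P'(2) by simp
    ultimately show "R w" unfolding R_def by (metis less_imp_le less_irrefl)
  qed
  then obtain m where "0 \<le> m" "polar_level (weight_vec P) m" "m = 0 \<longrightarrow> degenerate (weight_vec P)"
    unfolding R_def by blast
  moreover have "m \<noteq> 0" using calculation(3) weight_vec_not_degenerate by blast
  ultimately show ?thesis by (intro that[of m]) auto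
qed

end

section \<open>Face functions of a convenient mixed function\<close>

lemma exp_point_eq_0_iff: "exp_point nu mu = 0 \<longleftrightarrow> nu = (\<lambda>_. 0) \<and> mu = (\<lambda>_. 0)"
  unfolding vec_eq_iff fun_eq_iff by (simp only: zero_index exp_point_nth of_nat_eq_0_iff add_is_0) blast

lemma weight_face_of_face_function:
  fixes c :: "('n::finite) mixed"
  assumes conv: "convenient c" and vanish: "c (\<lambda>_. 0) (\<lambda>_. 0) = 0" and P: "weight_vector P"
    and nm: "(nu, mu) \<in> mixed_support (face_function P c)"
  shows "weight_face c (support_points c \<inter> DeltaP P c) (exp_point nu mu) P"
proof unfold_locales
  show "\<forall>s\<in>support_points c. \<forall>j. \<exists>k::nat. s$j = real k" by (rule support_points_nat_coords)
  show "support_points c \<inter> DeltaP P c \<subseteq> support_points c" by (rule Int_lower1)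
  show "exp_point nu mu \<in> support_points c \<inter> DeltaP P c"
    using nm unfolding mixed_support_face_function support_points_def by blast
  have "c nu mu \<noteq> 0"
    using nm by (simp add: mixed_support_def face_function_def split: if_splits)
  hence "(nu, mu) \<noteq> ((\<lambda>_. 0), (\<lambda>_. 0))" using vanish by auto
  thus "exp_point nu mu \<noteq> 0" unfolding exp_point_eq_0_iff by simp
qed (fact conv P refl)+

lemma polar_wh_with_subset:
  assumes "polar_wh_with h Q P' mr mp" "mixed_polynomial g" "mixed_support g \<subseteq> mixed_support h"
  shows "polar_wh_with g Q P' mr mp"
  using assms unfolding polar_wh_with_def by (meson subsetD)

lemma strongly_polar_positive_wh_imp_polar_weighted_homogeneous:
  "strongly_polar_positive_wh h P \<Longrightarrow> polar_weighted_homogeneous h"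
  unfolding strongly_polar_positive_wh_def polar_weighted_homogeneous_def by blast

lemma strongly_polar_positive_wh_face_function_trivial:
  assumes "weight_vector P" "mixed_support (face_function P c) = {}"
  shows "strongly_polar_positive_wh (face_function P c) P"
proof -
  have "polar_wh_with (face_function P c) P P 1 1"
    using assms by (simp add: polar_wh_with_def mixed_polynomial_def)
  thus ?thesis unfolding strongly_polar_positive_wh_def using zero_less_one by blast
qed

lemma face_function_support_in_facet:
  fixes c :: "('n::finite) mixed"
  assumes conv: "convenient c" and vanish: "c (\<lambda>_. 0) (\<lambda>_. 0) = 0" and P: "weight_vector P"
    and nonzero: "mixed_support (face_function P c) \<noteq> {}"
  obtains P' where "weight_vector P'" "aff_dim (DeltaP P' c) = int CARD('n) - 1"
    "mixed_support (face_function P c) \<subseteq> mixed_support (face_function P' c)"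
proof -
  from nonzero obtain nu mu where "(nu, mu) \<in> mixed_support (face_function P c)" by auto
  then interpret weight_face c "support_points c \<inter> DeltaP P c" "exp_point nu mu" P
    by (rule weight_face_of_face_function[OF conv vanish P])
  obtain P' where "weight_vector P'" "aff_dim (DeltaP P' c) = int CARD('n) - 1"
      "support_points c \<inter> DeltaP P c \<subseteq> DeltaP P' c"
    by (rule exists_facet_containing)
  thus ?thesis
    using that unfolding mixed_support_face_function support_points_def by blast
qed

lemma face_function_strongly_polar:
  fixes c :: "('n::finite) mixed"
  assumes conv: "convenient c" and vanish: "c (\<lambda>_. 0) (\<lambda>_. 0) = 0" and P: "weight_vector P"
    and H: "strongly_polar_positive_wh_face_type c"
  shows "strongly_polar_positive_wh (face_function P c) P"
proof (cases "mixed_support (face_function P c) = {}")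
  case True thus ?thesis using strongly_polar_positive_wh_face_function_trivial P by blast
next
  case False
  then obtain nu0 mu0 where nm0: "(nu0, mu0) \<in> mixed_support (face_function P c)" by auto
  then interpret weight_face c "support_points c \<inter> DeltaP P c" "exp_point nu0 mu0" P
    by (rule weight_face_of_face_function[OF conv vanish P])
  obtain m where m: "0 < m" "polar_level (weight_vec P) m"
    using positive_polar_level[OF H] by blast
  define mr where "mr = (\<Sum>j\<in>UNIV. int (P j) * int (nu0 j + mu0 j))"
  define mp where "mp = (\<Sum>j\<in>UNIV. int (P j) * (int (nu0 j) - int (mu0 j)))"
  have polar: "real_of_int (\<Sum>j\<in>UNIV. int (P j) * (int (nu j) - int (mu j))) = m"
    if "(nu, mu) \<in> mixed_support (face_function P c)" for nu mu
  proof -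
    have "(nu, mu) \<in> mixed_support c" "exp_point nu mu \<in> support_points c \<inter> DeltaP P c"
      using that unfolding mixed_support_face_function support_points_def by auto
    thus ?thesis using m(2) inner_weight_vec_exp_diff[of P nu mu] unfolding polar_level_def by simp
  qed
  have radial: "(\<Sum>j\<in>UNIV. int (P j) * int (nu j + mu j)) = mr"
    if "(nu, mu) \<in> mixed_support (face_function P c)" for nu mu
    using face_function_radial_degree[OF that] face_function_radial_degree[OF nm0]
    unfolding mr_def by linarith
  have "mp > 0" using polar[OF nm0] m(1) unfolding mp_def by linarith
  moreover have "mr \<noteq> 0"
  proof -
    obtain j0 where "exp_point nu0 mu0 $ j0 \<noteq> 0"
      using t0_nonzero by (metis vec_eq_iff zero_index)
    hence "0 < int (P j0) * int (nu0 j0 + mu0 j0)" using P unfolding weight_vector_def by simp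
    also have "\<dots> \<le> mr" unfolding mr_def by (rule member_le_sum) auto
    finally show ?thesis by simp
  qed
  moreover have "(\<Sum>j\<in>UNIV. int (P j) * (int (nu j) - int (mu j))) = mp"
    if "(nu, mu) \<in> mixed_support (face_function P c)" for nu mu
    using polar[OF that] polar[OF nm0] unfolding mp_def by (metis of_int_eq_iff)
  ultimately have "polar_wh_with (face_function P c) P P mr mp"
    using P mixed_polynomial_face_function[OF P] radial unfolding polar_wh_with_def by auto
  thus ?thesis unfolding strongly_polar_positive_wh_def using \<open>mp > 0\<close> by blast
qed

theorem proposition5:
  fixes c :: "('n::finite) mixed"
  assumes conv: "mixed_convergent c"
    and vanish: "c (\<lambda>_. 0) (\<lambda>_. 0) = 0"
    and convenient: "convenient c"
  shows "(polar_positive_wh_face_type c \<longrightarrow>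
            (\<forall>P. weight_vector P \<longrightarrow> polar_weighted_homogeneous (face_function P c)))
       \<and> (strongly_polar_positive_wh_face_type c \<longrightarrow>
            (\<forall>P. weight_vector P \<longrightarrow> strongly_polar_positive_wh (face_function P c) P))"
proof (intro conjI impI allI)
  fix P :: "'n \<Rightarrow> nat"
  assume H: "polar_positive_wh_face_type c" and P: "weight_vector P"
  show "polar_weighted_homogeneous (face_function P c)"
  proof (cases "mixed_support (face_function P c) = {}")
    case True
    from strongly_polar_positive_wh_face_function_trivial[OF P True] show ?thesis
      by (rule strongly_polar_positive_wh_imp_polar_weighted_homogeneous)
  next
    case False
    then obtain P' where P': "weight_vector P'" "aff_dim (DeltaP P' c) = int CARD('n) - 1"
        "mixed_support (face_function P c) \<subseteq> mixed_support (face_function P' c)"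
      using face_function_support_in_facet[OF convenient vanish P] by blast
    then obtain Q P'' mr mp where "polar_wh_with (face_function P' c) Q P'' mr mp"
      using H unfolding polar_positive_wh_face_type_def by blast
    hence "polar_wh_with (face_function P c) Q P'' mr mp"
      by (rule polar_wh_with_subset[OF _ mixed_polynomial_face_function[OF P] P'(3)])
    thus ?thesis unfolding polar_weighted_homogeneous_def by blast
  qed
next
  fix P :: "'n \<Rightarrow> nat"
  assume H: "strongly_polar_positive_wh_face_type c" and P: "weight_vector P"
  show "strongly_polar_positive_wh (face_function P c) P"
    using face_function_strongly_polar[OF convenient vanish P H] .
qed

end
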